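(* Let $\sigma$ be a sequence of $n$ integers and let $P_1,\dots,P_{\mathsf{lis}(\sigma)}$ be the piles produced by the complete execution of Patience Sorting on $\sigma$. Given the pile $P_{i}$ stored explicitly (for some $i\ge 0$) and an index $j$ with $i < j \le \mathsf{lis}(\sigma)$, the pile $P_{j}$ can be computed in $O(n \log n)$ time using $O((|P_{i}| + |P_{j}| + j-i) \log n)$ bits of working space.
   Context: Patience Sorting on $\sigma=\langle\sigma(1),\dots,\sigma(n)\rangle$ (repetitions allowed): piles are stacks, $\mathtt{top}(P)$ is the most recently pushed element. Initially $\ell=0$ and a dummy pile $P_0$ contains only $-\infty$. For $x=1,\dots,n$: if $\sigma(x)>\mathtt{top}(P_\ell)$, increment $\ell$ and push $\sigma(x)$ onto a new pile $P_\ell$; otherwise push $\sigma(x)$ onto $P_h$ for the smallest $h$ with $\sigma(x)\le \mathtt{top}(P_h)$. Each element is regarded together with its index in $\sigma$; computing a pile means producing its elements (with indices) in push order. The final number of piles equals $\mathsf{lis}(\sigma)$, the length of a longest increasing subsequence. Computational model: RAM with read-only input and space measured in bits of read-write working memory. *)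

theory Defs
  imports Complex_Main
begin

text \<open>The input sequence sigma is an int list; position x (1-based, as in the paper)
  holds sigma ! (x - 1).  A pile is represented by the list of indices of its elements
  in push order (the element with index x is sigma(x)); the top of a pile is its last entry.
  The piles P_1, P_2, ... are the entries 0, 1, ... of the pile list.  The dummy pile P_0
  (containing only minus infinity) is never pushed onto, so it is left implicit.\<close>

definition sval :: "int list \<Rightarrow> nat \<Rightarrow> int" where
  "sval \<sigma> x = \<sigma> ! (x - 1)"

definition ps_step :: "int list \<Rightarrow> nat list list \<Rightarrow> nat \<Rightarrow> nat list list" where
  "ps_step \<sigma> Ps x =
     (if Ps = [] \<or> sval \<sigma> x > sval \<sigma> (last (last Ps))
      then Ps @ [[x]]
      else (let h = (LEAST h. h < length Ps \<and> sval \<sigma> x \<le> sval \<sigma> (last (Ps ! h)))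
            in Ps[h := (Ps ! h) @ [x]]))"

definition piles :: "int list \<Rightarrow> nat list list" where
  "piles \<sigma> = foldl (ps_step \<sigma>) [] [1..<Suc (length \<sigma>)]"

text \<open>Pile P_j (j \<ge> 1) as list of indices in push order; P_0 is the dummy pile, whose only
  element is minus infinity, which carries no input index: we represent it by [].\<close>
definition pile :: "int list \<Rightarrow> nat \<Rightarrow> nat list" where
  "pile \<sigma> j = (if j = 0 then [] else piles \<sigma> ! (j - 1))"

text \<open>There are two read-only inputs: the sequence sigma (accessed by comparing
  the elements at two positions) and an auxiliary read-only array A holding the parameters
  i, j followed by the index list of the explicitly stored pile P_i.  Output is a write-only
  stream of numbers (here: the indices of the elements of the computed pile, in push order).\<close>

definition word_size :: "nat \<Rightarrow> nat" where
  "word_size n = nat \<lceil>log 2 (real n + 2)\<rceil> + 1"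

datatype instr =
    Const nat nat
  | Add nat nat nat
  | Sub nat nat nat
  | Mul nat nat nat
  | Div nat nat nat
  | Less nat nat nat
  | Load nat nat
  | Store nat nat
  | InLen nat
  | CmpIn nat nat nat
  | AuxLen nat
  | AuxRead nat nat
  | Jz nat nat
  | Jmp nat
  | Out nat
  | Halt

type_synonym config = "nat \<times> (nat \<Rightarrow> nat) \<times> nat list"

definition halted :: "instr list \<Rightarrow> config \<Rightarrow> bool" where
  "halted P c = (fst c \<ge> length P \<or> P ! fst c = Halt)"

fun exec :: "nat \<Rightarrow> int list \<Rightarrow> nat list \<Rightarrow> instr \<Rightarrow> config \<Rightarrow> config" where
  "exec w \<sigma> A (Const r k) (pc, M, out) = (Suc pc, M(r := k mod 2^w), out)"
| "exec w \<sigma> A (Add r a b) (pc, M, out) = (Suc pc, M(r := (M a + M b) mod 2^w), out)"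
| "exec w \<sigma> A (Sub r a b) (pc, M, out) = (Suc pc, M(r := M a - M b), out)"
| "exec w \<sigma> A (Mul r a b) (pc, M, out) = (Suc pc, M(r := (M a * M b) mod 2^w), out)"
| "exec w \<sigma> A (Div r a b) (pc, M, out) = (Suc pc, M(r := M a div M b), out)"
| "exec w \<sigma> A (Less r a b) (pc, M, out) = (Suc pc, M(r := (if M a < M b then 1 else 0)), out)"
| "exec w \<sigma> A (Load r a) (pc, M, out) = (Suc pc, M(r := M (M a)), out)"
| "exec w \<sigma> A (Store r a) (pc, M, out) = (Suc pc, M(M a := M r), out)"
| "exec w \<sigma> A (InLen r) (pc, M, out) = (Suc pc, M(r := length \<sigma> mod 2^w), out)"
| "exec w \<sigma> A (CmpIn r a b) (pc, M, out) =
     (Suc pc, M(r := (if 1 \<le> M a \<and> M a \<le> length \<sigma> \<and> 1 \<le> M b \<and> M b \<le> length \<sigma>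
                         \<and> sval \<sigma> (M a) \<le> sval \<sigma> (M b) then 1 else 0)), out)"
| "exec w \<sigma> A (AuxLen r) (pc, M, out) = (Suc pc, M(r := length A mod 2^w), out)"
| "exec w \<sigma> A (AuxRead r a) (pc, M, out) =
     (Suc pc, M(r := (if M a < length A then A ! (M a) mod 2^w else 0)), out)"
| "exec w \<sigma> A (Jz r t) (pc, M, out) = ((if M r = 0 then t else Suc pc), M, out)"
| "exec w \<sigma> A (Jmp t) (pc, M, out) = (t, M, out)"
| "exec w \<sigma> A (Out r) (pc, M, out) = (Suc pc, M, out @ [M r])"
| "exec w \<sigma> A Halt c = c"

definition step :: "instr list \<Rightarrow> int list \<Rightarrow> nat list \<Rightarrow> config \<Rightarrow> config" where
  "step P \<sigma> A c = (if halted P c then c else exec (word_size (length \<sigma>)) \<sigma> A (P ! fst c) c)"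

definition init_config :: config where
  "init_config = (0, (\<lambda>_. 0), [])"

definition conf :: "instr list \<Rightarrow> int list \<Rightarrow> nat list \<Rightarrow> nat \<Rightarrow> config" where
  "conf P \<sigma> A t = (step P \<sigma> A ^^ t) init_config"

definition space :: "nat \<Rightarrow> config \<Rightarrow> nat" where
  "space n c = word_size n * (LEAST k. \<forall>r\<ge>k. fst (snd c) r = 0)"

definition out_of :: "config \<Rightarrow> nat list" where
  "out_of c = snd (snd c)"

end

theory Submission
  imports Defs "HOL-Library.Discrete_Functions"
begin

(* The piles P_(i+1), ..., P_j form a contiguous block, so their tops are exactly the entries of
   positions i+1..j of the usual array of pile tops, which is increasing. Scanning sigma once,
   the algorithm keeps only this window of j - i tops in working memory. An element x lands
   below P_(i+1) exactly when it is the next unread element of the stored pile P_i or is not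
   larger than the current top of P_i (both decided from P_i alone); otherwise it lands in the
   window at the position found by binary search, or to the right of it. Each element thus
   costs O(log n) steps, and the window together with a constant number of registers needs
   O((j - i) log n) bits. *)

definition piles_after :: "int list \<Rightarrow> nat \<Rightarrow> nat list list" where
  "piles_after \<sigma> t = foldl (ps_step \<sigma>) [] [1..<Suc t]"

lemma piles_after_0 [simp]: "piles_after \<sigma> 0 = []"
  by (simp add: piles_after_def)

lemma piles_after_Suc: "piles_after \<sigma> (Suc t) = ps_step \<sigma> (piles_after \<sigma> t) (Suc t)"
  by (simp add: piles_after_def)

lemma piles_eq_piles_after: "piles \<sigma> = piles_after \<sigma> (length \<sigma>)"
  by (simp add: piles_after_def piles_def)

text \<open>The 0-based index of the pile that receives x; it is the length of the pile list when
  x opens a new pile.\<close>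
definition target_pile :: "int list \<Rightarrow> nat list list \<Rightarrow> nat \<Rightarrow> nat" where
  "target_pile \<sigma> Ps x = length (takeWhile (\<lambda>p. sval \<sigma> (last p) < sval \<sigma> x) Ps)"

definition tops_sorted :: "int list \<Rightarrow> nat list list \<Rightarrow> bool" where
  "tops_sorted \<sigma> Ps \<longleftrightarrow>
     (\<forall>p\<in>set Ps. p \<noteq> []) \<and> sorted_wrt (\<lambda>p q. sval \<sigma> (last p) < sval \<sigma> (last q)) Ps"

lemma tops_sorted_nth_less:
  assumes "tops_sorted \<sigma> Ps" "a < b" "b < length Ps"
  shows "sval \<sigma> (last (Ps ! a)) < sval \<sigma> (last (Ps ! b))"
  using assms unfolding tops_sorted_def sorted_wrt_iff_nth_less by blast

lemma target_pile_le_length: "target_pile \<sigma> Ps x \<le> length Ps"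
  by (simp add: target_pile_def length_takeWhile_le)

lemma top_less_before_target:
  assumes "k < target_pile \<sigma> Ps x"
  shows "sval \<sigma> (last (Ps ! k)) < sval \<sigma> x"
proof -
  let ?T = "takeWhile (\<lambda>p. sval \<sigma> (last p) < sval \<sigma> x) Ps"
  have "?T ! k \<in> set ?T" using assms unfolding target_pile_def by simp
  then have "sval \<sigma> (last (?T ! k)) < sval \<sigma> x" by (rule set_takeWhileD[THEN conjunct2])
  moreover have "?T ! k = Ps ! k" using assms unfolding target_pile_def by (rule takeWhile_nth)
  ultimately show ?thesis by simp
qed

lemma le_top_from_target:
  assumes "tops_sorted \<sigma> Ps" "target_pile \<sigma> Ps x \<le> k" "k < length Ps"
  shows "sval \<sigma> x \<le> sval \<sigma> (last (Ps ! k))"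
proof -
  let ?l = "target_pile \<sigma> Ps x"
  have "\<not> sval \<sigma> (last (Ps ! ?l)) < sval \<sigma> x"
    using assms(2,3) unfolding target_pile_def by (intro nth_length_takeWhile) simp
  moreover have "sval \<sigma> (last (Ps ! ?l)) \<le> sval \<sigma> (last (Ps ! k))"
    using tops_sorted_nth_less[OF assms(1) _ assms(3)] assms(2)
    by (cases "?l = k") (auto intro: less_imp_le)
  ultimately show ?thesis by simp
qed

lemma target_pile_eq_length_iff:
  assumes "tops_sorted \<sigma> Ps"
  shows "target_pile \<sigma> Ps x = length Ps \<longleftrightarrow> Ps = [] \<or> sval \<sigma> (last (last Ps)) < sval \<sigma> x"
proof
  assume "target_pile \<sigma> Ps x = length Ps"
  then show "Ps = [] \<or> sval \<sigma> (last (last Ps)) < sval \<sigma> x"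
    using top_less_before_target[of "length Ps - 1" \<sigma> Ps x] by (cases Ps rule: rev_cases) auto
next
  assume top: "Ps = [] \<or> sval \<sigma> (last (last Ps)) < sval \<sigma> x"
  show "target_pile \<sigma> Ps x = length Ps"
  proof (rule ccontr)
    assume "target_pile \<sigma> Ps x \<noteq> length Ps"
    then have "target_pile \<sigma> Ps x \<le> length Ps - 1" "Ps \<noteq> []"
      using target_pile_le_length[of \<sigma> Ps x] by auto
    then show False
      using le_top_from_target[OF assms, of x "length Ps - 1"] top by (simp add: last_conv_nth)
  qed
qed

lemma ps_step_target_pile:
  assumes "tops_sorted \<sigma> Ps"
  shows "ps_step \<sigma> Ps x = (if target_pile \<sigma> Ps x = length Ps then Ps @ [[x]]
           else Ps[target_pile \<sigma> Ps x := Ps ! target_pile \<sigma> Ps x @ [x]])"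
proof (cases "target_pile \<sigma> Ps x = length Ps")
  case True
  then show ?thesis using target_pile_eq_length_iff[OF assms] unfolding ps_step_def by simp
next
  case False
  let ?p = "target_pile \<sigma> Ps x"
  have "?p < length Ps" using False target_pile_le_length[of \<sigma> Ps x] by simp
  then have "(LEAST h. h < length Ps \<and> sval \<sigma> x \<le> sval \<sigma> (last (Ps ! h))) = ?p"
    using le_top_from_target[OF assms] top_less_before_target[of _ \<sigma> Ps x]
    by (intro Least_equality) (auto simp: not_less[symmetric])
  then show ?thesis using False target_pile_eq_length_iff[OF assms] unfolding ps_step_def
    by (simp add: Let_def)
qed

lemma tops_sorted_ps_step:
  assumes "tops_sorted \<sigma> Ps"
  shows "tops_sorted \<sigma> (ps_step \<sigma> Ps x)"
proof (cases "target_pile \<sigma> Ps x = length Ps")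
  case True
  have "sval \<sigma> (last q) < sval \<sigma> x" if "q \<in> set Ps" for q
    using that True top_less_before_target[of _ \<sigma> Ps x] by (auto simp: in_set_conv_nth)
  then show ?thesis
    using assms True unfolding ps_step_target_pile[OF assms] tops_sorted_def
    by (simp add: sorted_wrt_append)
next
  case False
  let ?p = "target_pile \<sigma> Ps x"
  let ?L = "Ps[?p := Ps ! ?p @ [x]]"
  have p: "?p < length Ps" using False target_pile_le_length[of \<sigma> Ps x] by simp
  have top_L: "last (?L ! a) = (if a = ?p then x else last (Ps ! a))" if "a < length Ps" for a
    using that by (simp add: nth_list_update)
  have "sval \<sigma> (last (?L ! a)) < sval \<sigma> (last (?L ! b))" if ab: "a < b" "b < length Ps" for a b
  proof -
    have "sval \<sigma> x \<le> sval \<sigma> (last (Ps ! ?p))" using le_top_from_target[OF assms _ p] by simp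
    then show ?thesis
      using ab top_L tops_sorted_nth_less[OF assms] top_less_before_target[of a \<sigma> Ps x]
      by (cases "a = ?p"; cases "b = ?p") force+
  qed
  moreover have "q \<noteq> []" if "q \<in> set ?L" for q
  proof -
    obtain a where "a < length Ps" "q = ?L ! a" using \<open>q \<in> set ?L\<close> by (auto simp: in_set_conv_nth)
    then show ?thesis using assms unfolding tops_sorted_def by (cases "a = ?p") auto
  qed
  ultimately show ?thesis
    using False unfolding ps_step_target_pile[OF assms] tops_sorted_def sorted_wrt_iff_nth_less
    by auto
qed

lemma tops_sorted_piles_after: "tops_sorted \<sigma> (piles_after \<sigma> t)"
  by (induction t) (simp add: tops_sorted_def, simp add: piles_after_Suc tops_sorted_ps_step)


definition pushed_onto :: "int list \<Rightarrow> nat \<Rightarrow> nat \<Rightarrow> bool" where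
  "pushed_onto \<sigma> k x \<longleftrightarrow> target_pile \<sigma> (piles_after \<sigma> (x - 1)) x = k"

lemma pushed_onto_Suc:
  "pushed_onto \<sigma> k (Suc t) \<longleftrightarrow> target_pile \<sigma> (piles_after \<sigma> t) (Suc t) = k"
  by (simp add: pushed_onto_def)

lemma piles_after_Suc_target:
  "piles_after \<sigma> (Suc t) =
     (if target_pile \<sigma> (piles_after \<sigma> t) (Suc t) = length (piles_after \<sigma> t)
      then piles_after \<sigma> t @ [[Suc t]]
      else (piles_after \<sigma> t)[target_pile \<sigma> (piles_after \<sigma> t) (Suc t) :=
              piles_after \<sigma> t ! target_pile \<sigma> (piles_after \<sigma> t) (Suc t) @ [Suc t]])"
  by (simp add: piles_after_Suc ps_step_target_pile[OF tops_sorted_piles_after])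

lemma piles_after_pushed_onto:
  "(k < length (piles_after \<sigma> t) \<longrightarrow> piles_after \<sigma> t ! k = filter (pushed_onto \<sigma> k) [1..<Suc t]) \<and>
   (length (piles_after \<sigma> t) \<le> k \<longrightarrow> filter (pushed_onto \<sigma> k) [1..<Suc t] = [])"
proof (induction t arbitrary: k)
  case (Suc t)
  let ?p = "target_pile \<sigma> (piles_after \<sigma> t) (Suc t)"
  have "filter (pushed_onto \<sigma> k) [1..<Suc (Suc t)] =
          filter (pushed_onto \<sigma> k) [1..<Suc t] @ (if ?p = k then [Suc t] else [])"
    by (simp add: pushed_onto_Suc)
  moreover have "?p \<le> length (piles_after \<sigma> t)" by (rule target_pile_le_length)
  ultimately show ?case
    using Suc.IH[of k] unfolding piles_after_Suc_target
    by (cases "?p = length (piles_after \<sigma> t)") (auto simp: nth_append nth_list_update)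
qed simp

lemma length_piles_after_le: "length (piles_after \<sigma> t) \<le> t"
  by (induction t) (simp_all add: piles_after_Suc_target)

lemma piles_after_nonempty: "k < length (piles_after \<sigma> t) \<Longrightarrow> piles_after \<sigma> t ! k \<noteq> []"
  using tops_sorted_piles_after[of \<sigma> t] unfolding tops_sorted_def by (metis nth_mem)

lemma mem_piles_after_range:
  "k < length (piles_after \<sigma> t) \<Longrightarrow> y \<in> set (piles_after \<sigma> t ! k) \<Longrightarrow> 1 \<le> y \<and> y \<le> t"
  using piles_after_pushed_onto[of k \<sigma> t] by auto

lemma top_piles_after_range:
  "k < length (piles_after \<sigma> t) \<Longrightarrow> 1 \<le> last (piles_after \<sigma> t ! k) \<and> last (piles_after \<sigma> t ! k) \<le> t"
  using mem_piles_after_range[of k \<sigma> t "last (piles_after \<sigma> t ! k)"] piles_after_nonempty[of k \<sigma> t]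
  by simp

text \<open>Control flow: pc 0 sets the cursor; pcs 1--6 move on to the next element x or halt;
  7--11 and 25--27 detect the element of P_i at the cursor; 12--24 decide, from P_i alone,
  whether x lands to the left of P_(i+1); 28--50 binary-search the window; 51--67 store x in
  the window and output it when it lands on P_j.\<close>
definition prog :: "instr list" where
  "prog = [Const 1 2,
    Const 4 1,
    Add 0 0 4,
    InLen 4,
    Less 5 4 0,
    Jz 5 7,
    Halt,
    AuxRead 4 1,
    Sub 5 4 0,
    Sub 4 0 4,
    Add 4 4 5,
    Jz 4 25,
    Const 4 2,
    Sub 4 1 4,
    Jz 4 21,
    Const 4 1,
    Sub 4 1 4,
    AuxRead 4 4,
    CmpIn 4 0 4,
    Jz 4 28,
    Jmp 1,
    Const 4 0,
    AuxRead 4 4,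
    Jz 4 28,
    Jmp 1,
    Const 4 1,
    Add 1 1 4,
    Jmp 1,
    Const 2 0,
    Const 4 0,
    AuxRead 3 4,
    Const 4 1,
    AuxRead 4 4,
    Sub 3 4 3,
    Less 4 2 3,
    Jz 4 51,
    Add 4 2 3,
    Const 5 2,
    Div 4 4 5,
    Const 5 6,
    Add 5 5 4,
    Load 5 5,
    Jz 5 45,
    CmpIn 5 0 5,
    Jz 5 48,
    Const 5 0,
    Add 3 4 5,
    Jmp 34,
    Const 5 1,
    Add 2 4 5,
    Jmp 34,
    Const 4 0,
    AuxRead 5 4,
    Const 4 1,
    AuxRead 4 4,
    Sub 4 4 5,
    Less 5 2 4,
    Jz 5 1,
    Const 5 6,
    Add 5 5 2,
    Store 0 5,
    Const 5 1,
    Add 5 2 5,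
    Sub 5 4 5,
    Jz 5 66,
    Jmp 1,
    Out 0,
    Jmp 1]"

lemma prog_len: "length prog = 68"
  by (simp add: prog_def)

lemma prog_nth [simp]:
  "prog ! 0 = Const 1 2"
  "prog ! 1 = Const 4 1"
  "prog ! Suc 0 = Const 4 1"
  "prog ! 2 = Add 0 0 4"
  "prog ! 3 = InLen 4"
  "prog ! 4 = Less 5 4 0"
  "prog ! 5 = Jz 5 7"
  "prog ! 6 = Halt"
  "prog ! 7 = AuxRead 4 1"
  "prog ! 8 = Sub 5 4 0"
  "prog ! 9 = Sub 4 0 4"
  "prog ! 10 = Add 4 4 5"
  "prog ! 11 = Jz 4 25"
  "prog ! 12 = Const 4 2"
  "prog ! 13 = Sub 4 1 4"
  "prog ! 14 = Jz 4 21"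
  "prog ! 15 = Const 4 1"
  "prog ! 16 = Sub 4 1 4"
  "prog ! 17 = AuxRead 4 4"
  "prog ! 18 = CmpIn 4 0 4"
  "prog ! 19 = Jz 4 28"
  "prog ! 20 = Jmp 1"
  "prog ! 21 = Const 4 0"
  "prog ! 22 = AuxRead 4 4"
  "prog ! 23 = Jz 4 28"
  "prog ! 24 = Jmp 1"
  "prog ! 25 = Const 4 1"
  "prog ! 26 = Add 1 1 4"
  "prog ! 27 = Jmp 1"
  "prog ! 28 = Const 2 0"
  "prog ! 29 = Const 4 0"
  "prog ! 30 = AuxRead 3 4"
  "prog ! 31 = Const 4 1"
  "prog ! 32 = AuxRead 4 4"
  "prog ! 33 = Sub 3 4 3"
  "prog ! 34 = Less 4 2 3"
  "prog ! 35 = Jz 4 51"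
  "prog ! 36 = Add 4 2 3"
  "prog ! 37 = Const 5 2"
  "prog ! 38 = Div 4 4 5"
  "prog ! 39 = Const 5 6"
  "prog ! 40 = Add 5 5 4"
  "prog ! 41 = Load 5 5"
  "prog ! 42 = Jz 5 45"
  "prog ! 43 = CmpIn 5 0 5"
  "prog ! 44 = Jz 5 48"
  "prog ! 45 = Const 5 0"
  "prog ! 46 = Add 3 4 5"
  "prog ! 47 = Jmp 34"
  "prog ! 48 = Const 5 1"
  "prog ! 49 = Add 2 4 5"
  "prog ! 50 = Jmp 34"
  "prog ! 51 = Const 4 0"
  "prog ! 52 = AuxRead 5 4"
  "prog ! 53 = Const 4 1"
  "prog ! 54 = AuxRead 4 4"
  "prog ! 55 = Sub 4 4 5"
  "prog ! 56 = Less 5 2 4"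
  "prog ! 57 = Jz 5 1"
  "prog ! 58 = Const 5 6"
  "prog ! 59 = Add 5 5 2"
  "prog ! 60 = Store 0 5"
  "prog ! 61 = Const 5 1"
  "prog ! 62 = Add 5 2 5"
  "prog ! 63 = Sub 5 4 5"
  "prog ! 64 = Jz 5 66"
  "prog ! 65 = Jmp 1"
  "prog ! 66 = Out 0"
  "prog ! 67 = Jmp 1"
  by (simp_all add: prog_def)

lemma one_le_log2_plus_2: "1 \<le> log 2 (real n + 2)"
proof -
  have "log 2 2 \<le> log 2 (real n + 2)" by (subst log_le_cancel_iff) simp_all
  then show ?thesis by simp
qed

lemma word_size_le_log: "real (word_size n) \<le> 3 * log 2 (real n + 2)"
proof -
  have "real_of_int \<lceil>log 2 (real n + 2)\<rceil> \<le> log 2 (real n + 2) + 1"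
    "0 \<le> \<lceil>log 2 (real n + 2)\<rceil>"
    using one_le_log2_plus_2[of n] by linarith+
  then have "real (word_size n) = real_of_int \<lceil>log 2 (real n + 2)\<rceil> + 1"
    by (simp add: word_size_def)
  then show ?thesis using one_le_log2_plus_2[of n] \<open>real_of_int _ \<le> _\<close> by linarith
qed

lemma floor_log_double_le_log:
  assumes "m \<le> n"
  shows "real (floor_log (2 * m)) \<le> 1 + log 2 (real n + 2)"
proof (cases "m = 0")
  case False
  define k where "k = floor_log (2 * m)"
  have "2 ^ k \<le> 2 * m" unfolding k_def using False by (intro floor_log_exp2_le) simp
  then have "(2::real) powr real k \<le> 2 * real m"
    by (simp add: powr_realpow) (metis of_nat_le_iff of_nat_mult of_nat_numeral of_nat_power)
  then have "real (floor_log (2 * m)) \<le> log 2 (2 * real m)"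
    unfolding k_def using False by (simp add: le_log_iff)
  also have "\<dots> = 1 + log 2 (real m)" using False by (simp add: log_mult)
  also have "\<dots> \<le> 1 + log 2 (real n + 2)" using False assms by simp
  finally show ?thesis .
qed (use one_le_log2_plus_2[of n] in simp)

lemma time_bound_le:
  assumes "real f \<le> 1 + L" "1 \<le> L"
  shows "real (6 + n * (50 + 14 * f)) \<le> 100 * (real n + 1) * L"
proof -
  have "real n * (50 + 14 * real f) \<le> real n * (78 * L)"
    using assms by (intro mult_left_mono) simp_all
  moreover have "0 \<le> real n * L" using assms(2) by simp
  moreover have "100 * (real n + 1) * L = 100 * (real n * L) + 100 * L"
    by (simp add: algebra_simps)
  moreover have "real (6 + n * (50 + 14 * f)) = 6 + real n * (50 + 14 * real f)" by simp
  ultimately show ?thesis using assms(2) by linarith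
qed

lemma two_pow_word_size_ge: "2 * n + 4 \<le> 2 ^ word_size n"
proof -
  let ?c = "\<lceil>log 2 (real n + 2)\<rceil>"
  have c: "real_of_int ?c = real (nat ?c)" using one_le_log2_plus_2[of n] by simp
  have "real n + 2 = 2 powr (log 2 (real n + 2))" by simp
  also have "\<dots> \<le> 2 powr real (nat ?c)"
    unfolding c[symmetric] by (rule powr_mono) (simp_all add: le_of_int_ceiling)
  also have "\<dots> = 2 ^ nat ?c" by (rule powr_realpow) simp
  finally have "real (n + 2) \<le> real (2 ^ nat ?c)" by simp
  then have "n + 2 \<le> 2 ^ nat ?c" by (simp only: of_nat_le_iff)
  then show ?thesis unfolding word_size_def by simp
qed

lemma eight_le_two_pow_word_size:
  assumes "1 \<le> n"
  shows "8 \<le> (2::nat) ^ word_size n"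
proof -
  have "log 2 2 < log 2 (real n + 2)" using assms by (subst log_less_cancel_iff) simp_all
  then have "2 \<le> \<lceil>log 2 (real n + 2)\<rceil>" by simp
  then have "3 \<le> word_size n" unfolding word_size_def by linarith
  then have "(2::nat) ^ 3 \<le> 2 ^ word_size n" by (rule power_increasing) simp
  then show ?thesis by simp
qed

lemma word_size_pos [simp]: "0 < word_size n"
  by (simp add: word_size_def)

declare exec.simps [simp del]

lemma exec_Suc_pc [simp]:
  "exec w \<sigma> A (Const r k) (pc, M, out) = (pc + 1, M(r := k mod 2^w), out)"
  "exec w \<sigma> A (Add r a b) (pc, M, out) = (pc + 1, M(r := (M a + M b) mod 2^w), out)"
  "exec w \<sigma> A (Sub r a b) (pc, M, out) = (pc + 1, M(r := M a - M b), out)"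
  "exec w \<sigma> A (Div r a b) (pc, M, out) = (pc + 1, M(r := M a div M b), out)"
  "exec w \<sigma> A (Less r a b) (pc, M, out) = (pc + 1, M(r := (if M a < M b then 1 else 0)), out)"
  "exec w \<sigma> A (Load r a) (pc, M, out) = (pc + 1, M(r := M (M a)), out)"
  "exec w \<sigma> A (Store r a) (pc, M, out) = (pc + 1, M(M a := M r), out)"
  "exec w \<sigma> A (InLen r) (pc, M, out) = (pc + 1, M(r := length \<sigma> mod 2^w), out)"
  "exec w \<sigma> A (CmpIn r a b) (pc, M, out) =
     (pc + 1, M(r := (if 1 \<le> M a \<and> M a \<le> length \<sigma> \<and> 1 \<le> M b \<and> M b \<le> length \<sigma>
                         \<and> sval \<sigma> (M a) \<le> sval \<sigma> (M b) then 1 else 0)), out)"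
  "exec w \<sigma> A (AuxRead r a) (pc, M, out) =
     (pc + 1, M(r := (if M a < length A then A ! (M a) mod 2^w else 0)), out)"
  "exec w \<sigma> A (Jz r t) (pc, M, out) = ((if M r = 0 then t else pc + 1), M, out)"
  "exec w \<sigma> A (Jmp t) (pc, M, out) = (t, M, out)"
  "exec w \<sigma> A (Out r) (pc, M, out) = (pc + 1, M, out @ [M r])"
  by (simp_all add: exec.simps)

locale pile_scan =
  fixes \<sigma> :: "int list" and i j :: nat
  assumes ij: "i < j" and jlen: "j \<le> length (piles \<sigma>)"
begin

definition aux :: "nat list" where "aux = [i, j] @ pile \<sigma> i"
definition width :: nat where "width = j - i"

abbreviation landing :: "nat \<Rightarrow> nat" where
  "landing t \<equiv> target_pile \<sigma> (piles_after \<sigma> t) (Suc t)"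

abbreviation stp :: "config \<Rightarrow> config" where "stp \<equiv> step prog \<sigma> aux"

abbreviation W :: nat where "W \<equiv> 2 ^ word_size (length \<sigma>)"

abbreviation iteration_cost :: nat where "iteration_cost \<equiv> 50 + 14 * floor_log (2 * width)"

lemma j_le_length: "j \<le> length \<sigma>"
  using jlen length_piles_after_le[of \<sigma> "length \<sigma>"] by (simp add: piles_eq_piles_after)

lemma length_ge_1: "1 \<le> length \<sigma>"
  using j_le_length ij by simp

lemma step_prog_eq:
  "stp (pc, M, out) =
     (if pc < 68 \<and> prog ! pc \<noteq> Halt
      then exec (word_size (length \<sigma>)) \<sigma> aux (prog ! pc) (pc, M, out) else (pc, M, out))"
  unfolding step_def halted_def prog_len by (simp add: not_le)

lemma funpow_numeral_step: "(stp ^^ numeral k) c = (stp ^^ pred_numeral k) (stp c)"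
  by (simp only: numeral_eq_Suc funpow_Suc_right comp_apply)

lemma funpow_one_step: "(stp ^^ 1) c = stp c"
  by simp

lemma steps_add: "(stp ^^ (a + b)) c = c''" if "(stp ^^ a) c = c'" "(stp ^^ b) c' = c''"
proof -
  have "(stp ^^ (a + b)) c = (stp ^^ (b + a)) c" by (simp add: add.commute)
  also have "\<dots> = (stp ^^ b) ((stp ^^ a) c)" by (simp add: funpow_add)
  finally show ?thesis using that by simp
qed

lemma length_plus_5_less_W: "length \<sigma> + 5 < W"
  using two_pow_word_size_ge[of "length \<sigma>"] eight_le_two_pow_word_size[OF length_ge_1] by linarith

lemma Suc_Suc_0_eq_2 [simp]: "Suc (Suc 0) = 2"
  by simp

lemma mod_consts [simp]: "Suc 0 mod W = Suc 0" "2 mod W = 2" "6 mod W = 6"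
  using length_plus_5_less_W length_ge_1 by (simp_all add: mod_less)

text \<open>The state of the machine after t elements: register 0 holds t, register 1 the cursor,
  the position in aux of the first element of P_i beyond t (aux starts with i and j), and
  registers 6, 7, ... the window, the tops of P_(i+1), ..., P_j, with 0 for piles not yet
  opened. Registers 2 to 5 are used by the binary search and as temporaries.\<close>
definition cursor :: "nat \<Rightarrow> nat" where
  "cursor t = 2 + (if i = 0 then 0 else length (filter (pushed_onto \<sigma> (i - 1)) [1..<Suc t]))"

definition window :: "nat \<Rightarrow> nat list" where
  "window t = map last (take width (drop i (piles_after \<sigma> t)))"

definition emitted :: "nat \<Rightarrow> nat list" where
  "emitted t = filter (pushed_onto \<sigma> (j - 1)) [1..<Suc t]"

definition window_regs :: "nat list \<Rightarrow> (nat \<Rightarrow> nat) \<Rightarrow> bool" where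
  "window_regs L M \<longleftrightarrow> (\<forall>r\<ge>6. M r = (if r - 6 < length L then L ! (r - 6) else 0))"

definition scan_inv :: "nat \<Rightarrow> (nat \<Rightarrow> nat) \<Rightarrow> bool" where
  "scan_inv t M \<longleftrightarrow> M 0 = t \<and> M 1 = cursor t \<and> window_regs (window t) M"

lemma width_pos: "0 < width"
  using ij by (simp add: width_def)

lemma width_le_length: "width \<le> length \<sigma>"
  using j_le_length by (simp add: width_def)

lemma pile_eq_filter_pushed_onto:
  "0 < k \<Longrightarrow> k \<le> j \<Longrightarrow> pile \<sigma> k = filter (pushed_onto \<sigma> (k - 1)) [1..<Suc (length \<sigma>)]"
  using piles_after_pushed_onto[of "k - 1" \<sigma> "length \<sigma>"] jlen
  by (simp add: pile_def piles_eq_piles_after)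

lemma pile_j_emitted: "pile \<sigma> j = emitted (length \<sigma>)"
  using pile_eq_filter_pushed_onto[of j] ij by (simp add: emitted_def)

lemma aux_0 [simp]: "aux ! 0 = i"
  and aux_1 [simp]: "aux ! Suc 0 = j"
  and aux_Suc_Suc [simp]: "aux ! Suc (Suc k) = pile \<sigma> i ! k"
  and length_aux: "length aux = 2 + length (pile \<sigma> i)"
  by (simp_all add: aux_def)

lemma mem_pile_i_range: "y \<in> set (pile \<sigma> i) \<Longrightarrow> 1 \<le> y \<and> y \<le> length \<sigma>"
  using pile_eq_filter_pushed_onto[of i] ij by (cases "i = 0") (auto simp: pile_def)

lemma length_pile_i_le: "length (pile \<sigma> i) \<le> length \<sigma>"
proof (cases "i = 0")
  case False
  have "length (filter (pushed_onto \<sigma> (i - 1)) [1..<Suc (length \<sigma>)]) \<le> length [1..<Suc (length \<sigma>)]"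
    by (rule length_filter_le)
  then show ?thesis using pile_eq_filter_pushed_onto[of i] False ij by (simp del: upt_Suc)
qed (simp add: pile_def)

lemma aux_nth_le_length:
  assumes "k < length aux"
  shows "aux ! k \<le> length \<sigma>"
proof (cases "k < 2")
  case True
  then show ?thesis using ij j_le_length by (auto simp: less_2_cases_iff)
next
  case False
  then have "aux ! k = pile \<sigma> i ! (k - 2)" "k - 2 < length (pile \<sigma> i)"
    using assms by (simp_all add: aux_def nth_append)
  then show ?thesis using mem_pile_i_range[OF nth_mem] by simp
qed

lemma aux_nth_mod: "k < length aux \<Longrightarrow> aux ! k mod W = aux ! k"
  using aux_nth_le_length[of k] length_plus_5_less_W by simp

lemma length_aux_le: "length aux \<le> length \<sigma> + 2"
  using length_aux length_pile_i_le by simp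

abbreviation prefix_i :: "nat \<Rightarrow> nat list" where
  "prefix_i t \<equiv> filter (pushed_onto \<sigma> (i - 1)) [1..<Suc t]"

lemma pile_i_prefix_split: "0 < i \<Longrightarrow> t \<le> length \<sigma> \<Longrightarrow>
   pile \<sigma> i = prefix_i t @ filter (pushed_onto \<sigma> (i - 1)) [Suc t..<Suc (length \<sigma>)]"
  using upt_add_eq_append[of 1 "Suc t" "length \<sigma> - t"] ij by (simp add: pile_eq_filter_pushed_onto)

lemma cursor_le_length_aux: "t \<le> length \<sigma> \<Longrightarrow> cursor t \<le> length aux"
proof (cases "i = 0")
  case True
  have "cursor t = 2" unfolding cursor_def using True by simp
  then show ?thesis by (simp add: length_aux)
next
  case False
  assume t: "t \<le> length \<sigma>"
  have "length (prefix_i t) \<le> length (pile \<sigma> i)" using pile_i_prefix_split[OF _ t] False by simp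
  then show ?thesis using False by (simp add: cursor_def length_aux)
qed

lemma cursor_hit_iff:
  assumes "t < length \<sigma>"
  shows "(cursor t < length aux \<and> aux ! cursor t = Suc t) \<longleftrightarrow> (0 < i \<and> pushed_onto \<sigma> (i - 1) (Suc t))"
proof (cases "i = 0")
  case True
  have "cursor t = 2" unfolding cursor_def using True by simp
  moreover have "length aux = 2" unfolding length_aux using True by (simp add: pile_def)
  ultimately show ?thesis using True by simp
next
  case False
  let ?P = "pushed_onto \<sigma> (i - 1)"
  let ?rest = "filter ?P [Suc (Suc t)..<Suc (length \<sigma>)]"
  have "[Suc t..<Suc (length \<sigma>)] = Suc t # [Suc (Suc t)..<Suc (length \<sigma>)]"
    using assms by (simp add: upt_conv_Cons)
  then have sp: "pile \<sigma> i = prefix_i t @ (if ?P (Suc t) then [Suc t] else []) @ ?rest"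
    using pile_i_prefix_split[of t] False assms by simp
  have Q: "cursor t = Suc (Suc (length (prefix_i t)))" using False by (simp add: cursor_def)
  show ?thesis
  proof (cases "?P (Suc t)")
    case True
    then have "pile \<sigma> i ! length (prefix_i t) = Suc t" "length (prefix_i t) < length (pile \<sigma> i)"
      using sp by (simp_all add: nth_append)
    then show ?thesis using True False Q length_aux by simp
  next
    case F: False
    have "cursor t < length aux \<Longrightarrow> aux ! cursor t \<noteq> Suc t"
    proof -
      assume "cursor t < length aux"
      then have lt: "0 < length ?rest" using sp F Q length_aux by simp
      have "aux ! cursor t = ?rest ! 0" using sp F Q by (simp add: nth_append)
      moreover have "?rest ! 0 \<in> set ?rest" using lt by (rule nth_mem)
      moreover have "\<forall>y \<in> set ?rest. Suc (Suc t) \<le> y" by (simp del: upt_Suc)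
      ultimately show ?thesis by fastforce
    qed
    then show ?thesis using F by auto
  qed
qed

lemma target_below_if_cursor_start:
  assumes "0 < i" "cursor t = 2"
  shows "landing t < i"
proof -
  have c: "prefix_i t = []" using assms by (simp add: cursor_def)
  have "\<not> i - 1 < length (piles_after \<sigma> t)"
  proof
    assume "i - 1 < length (piles_after \<sigma> t)"
    then have "piles_after \<sigma> t ! (i - 1) = prefix_i t"
      using piles_after_pushed_onto[of "i - 1" \<sigma> t] by simp
    then show False using c piles_after_nonempty \<open>i - 1 < length (piles_after \<sigma> t)\<close> by simp
  qed
  then show ?thesis using target_pile_le_length[of \<sigma> "piles_after \<sigma> t" "Suc t"] assms by linarith
qed

lemma aux_before_cursor_is_top:
  assumes "0 < i" "t < length \<sigma>" "2 < cursor t"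
  shows "i - 1 < length (piles_after \<sigma> t) \<and> cursor t - 1 < length aux
           \<and> aux ! (cursor t - 1) = last (piles_after \<sigma> t ! (i - 1))"
proof -
  have c: "prefix_i t \<noteq> []" using assms by (simp add: cursor_def)
  have il: "i - 1 < length (piles_after \<sigma> t)"
  proof (rule ccontr)
    assume "\<not> i - 1 < length (piles_after \<sigma> t)"
    then have "prefix_i t = []" using piles_after_pushed_onto[of "i - 1" \<sigma> t] by simp
    then show False using c by simp
  qed
  then have e: "piles_after \<sigma> t ! (i - 1) = prefix_i t"
    using piles_after_pushed_onto[of "i - 1" \<sigma> t] by simp
  obtain m where m: "length (prefix_i t) = Suc m" using c by (cases "length (prefix_i t)") auto
  have Q: "cursor t - 1 = Suc (Suc m)" using assms m by (simp add: cursor_def)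
  have sp: "pile \<sigma> i = prefix_i t @ filter (pushed_onto \<sigma> (i - 1)) [Suc t..<Suc (length \<sigma>)]"
    using pile_i_prefix_split[of t] assms by simp
  have "aux ! (cursor t - 1) = prefix_i t ! m" unfolding Q aux_Suc_Suc sp
    using m by (simp add: nth_append)
  also have "\<dots> = last (prefix_i t)" using m c by (simp add: last_conv_nth)
  finally have "aux ! (cursor t - 1) = last (piles_after \<sigma> t ! (i - 1))" using e by simp
  moreover have "cursor t - 1 < length aux" using cursor_le_length_aux[of t] assms by simp
  ultimately show ?thesis using il by simp
qed

lemma top_less_iff_target_ge:
  assumes "0 < i" "i - 1 < length (piles_after \<sigma> t)"
  shows "sval \<sigma> (last (piles_after \<sigma> t ! (i - 1))) < sval \<sigma> (Suc t) \<longleftrightarrow> i \<le> landing t"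
proof
  assume a: "sval \<sigma> (last (piles_after \<sigma> t ! (i - 1))) < sval \<sigma> (Suc t)"
  show "i \<le> landing t"
  proof (rule ccontr)
    assume "\<not> ?thesis"
    then have "landing t \<le> i - 1" by simp
    then have "sval \<sigma> (Suc t) \<le> sval \<sigma> (last (piles_after \<sigma> t ! (i - 1)))"
      using le_top_from_target[OF tops_sorted_piles_after] assms by blast
    then show False using a by simp
  qed
next
  assume "i \<le> landing t"
  then have "i - 1 < landing t" using assms by simp
  then show "sval \<sigma> (last (piles_after \<sigma> t ! (i - 1))) < sval \<sigma> (Suc t)"
    by (rule top_less_before_target)
qed

lemma length_window: "length (window t) = min width (length (piles_after \<sigma> t) - i)"
  by (simp add: window_def)

lemma nth_window: "k < length (window t) \<Longrightarrow> window t ! k = last (piles_after \<sigma> t ! (i + k))"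
proof -
  assume k: "k < length (window t)"
  then have "i \<le> length (piles_after \<sigma> t)" "k < width" using length_window[of t] by linarith+
  then show ?thesis using k by (simp add: window_def nth_drop)
qed

lemma nth_window_range: "k < length (window t) \<Longrightarrow> 1 \<le> window t ! k \<and> window t ! k \<le> t"
proof -
  assume k: "k < length (window t)"
  then have "i + k < length (piles_after \<sigma> t)" using length_window[of t] by linarith
  then show ?thesis using nth_window[OF k] top_piles_after_range[of "i + k" \<sigma> t] by simp
qed

lemma window_Suc_left:
  assumes "landing t < i"
  shows "window (Suc t) = window t"
proof (cases "landing t = length (piles_after \<sigma> t)")
  case True
  then show ?thesis using assms by (simp add: window_def piles_after_Suc_target)
next
  case False
  then show ?thesis using assms by (simp add: window_def piles_after_Suc_target)
qed

lemma window_Suc_right: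
  assumes "i \<le> landing t" "width \<le> landing t - i"
  shows "window (Suc t) = window t"
proof (cases "landing t = length (piles_after \<sigma> t)")
  case True
  then show ?thesis using assms by (simp add: window_def piles_after_Suc_target)
next
  case False
  then show ?thesis using assms by (simp add: window_def piles_after_Suc_target drop_update_swap)
qed

lemma window_Suc_inside:
  assumes "i \<le> landing t" "landing t - i < width"
  shows "landing t - i \<le> length (window t) \<and>
    window (Suc t) = (if landing t - i < length (window t)
                  then (window t)[landing t - i := Suc t] else window t @ [Suc t])"
proof -
  let ?p = "landing t"
  let ?Ps = "piles_after \<sigma> t"
  have ple: "?p \<le> length ?Ps" by (rule target_pile_le_length)
  show ?thesis
  proof (cases "?p = length ?Ps")
    case True
    then have "length (window t) = ?p - i" using assms by (simp add: length_window)
    moreover have "window (Suc t) = window t @ [Suc t]"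
      using True assms by (simp add: window_def piles_after_Suc_target)
    ultimately show ?thesis by simp
  next
    case False
    then have lt: "?p - i < length (window t)" using assms ple by (simp add: length_window)
    have "window (Suc t) = (window t)[?p - i := Suc t]"
      using False assms
        by (simp add: window_def piles_after_Suc_target drop_update_swap take_update_swap
            map_update)
    then show ?thesis using lt by simp
  qed
qed

lemma goes_left_window_iff:
  assumes "i \<le> landing t" "k < width" "t < length \<sigma>"
  shows "((if k < length (window t) then window t ! k else 0) = 0 \<or>
          (1 \<le> Suc t \<and> Suc t \<le> length \<sigma> \<and> 1 \<le> (if k < length (window t) then window t ! k else 0) \<and>
           (if k < length (window t) then window t ! k else 0) \<le> length \<sigma> \<and>
           sval \<sigma> (Suc t) \<le> sval \<sigma> (if k < length (window t) then window t ! k else 0)))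
         \<longleftrightarrow> min (landing t - i) width \<le> k"
proof (cases "k < length (window t)")
  case True
  let ?p = "landing t"
  have m: "1 \<le> window t ! k" "window t ! k \<le> t" using nth_window_range[OF True] by auto
  have ik: "i + k < length (piles_after \<sigma> t)" using True length_window[of t] by linarith
  have "sval \<sigma> (Suc t) \<le> sval \<sigma> (window t ! k) \<longleftrightarrow> ?p \<le> i + k"
  proof
    assume "sval \<sigma> (Suc t) \<le> sval \<sigma> (window t ! k)"
    then show "?p \<le> i + k"
      using top_less_before_target[of "i + k" \<sigma> "piles_after \<sigma> t" "Suc t"] nth_window[OF True]
      by (metis not_le)
  next
    assume "?p \<le> i + k"
    then show "sval \<sigma> (Suc t) \<le> sval \<sigma> (window t ! k)"
      using le_top_from_target[OF tops_sorted_piles_after _ ik] nth_window[OF True] by simp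
  qed
  then show ?thesis using True m assms by auto
next
  case False
  then have "length (piles_after \<sigma> t) - i \<le> k" using assms by (simp add: length_window)
  then have "landing t - i \<le> k"
    using target_pile_le_length[of \<sigma> "piles_after \<sigma> t" "Suc t"] by linarith
  then show ?thesis using False by simp
qed

lemma cursor_Suc:
  "cursor (Suc t) = cursor t + (if 0 < i \<and> pushed_onto \<sigma> (i - 1) (Suc t) then 1 else 0)"
  by (simp add: cursor_def)

lemma emitted_Suc:
  "emitted (Suc t) = emitted t @ (if pushed_onto \<sigma> (j - 1) (Suc t) then [Suc t] else [])"
  by (simp add: emitted_def)

lemma window_regs_upd_low [simp]: "r < 6 \<Longrightarrow> window_regs L (M(r := v)) = window_regs L M"
  by (simp add: window_regs_def)

lemma window_regs_frame: "window_regs L M \<Longrightarrow> (\<forall>r\<ge>6. M' r = M r) \<Longrightarrow> window_regs L M'"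
  by (simp add: window_regs_def)

lemma i_mod [simp]: "i mod W = i"
  and j_mod [simp]: "j mod W = j"
  and length_mod [simp]: "length \<sigma> mod W = length \<sigma>"
  using length_plus_5_less_W ij j_le_length by simp_all

lemma aux_nonempty [simp]: "aux \<noteq> []" "Suc 0 < length aux"
  by (simp_all add: aux_def)

lemma small_mod [simp]: "k \<le> length \<sigma> \<Longrightarrow> k mod W = k"
  using length_plus_5_less_W by simp

lemma aux_nth_less_W [simp]: "k < length aux \<Longrightarrow> aux ! k < W"
  using aux_nth_le_length[of k] length_plus_5_less_W by simp

lemma absdiff_mod: "a < W \<Longrightarrow> b < W \<Longrightarrow> ((a - b) + (b - a)) mod W = 0 \<longleftrightarrow> a = b"
  by (cases "a \<le> b") (auto simp: mod_less)

lemma seg_advance: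
  assumes "M 0 = t" "t < length \<sigma>"
  shows "\<exists>M'. (stp ^^ 5) (1, M, out) = (7, M', out)
         \<and> M' 0 = Suc t \<and> M' 1 = M 1 \<and> (\<forall>r\<ge>6. M' r = M r)"
  using assms length_plus_5_less_W by (simp add: funpow_numeral_step step_prog_eq)

lemma seg_halt:
  assumes "M 0 = length \<sigma>"
  shows "\<exists>M'. (stp ^^ 5) (1, M, out) = (6, M', out)"
  using assms length_plus_5_less_W by (simp add: funpow_numeral_step step_prog_eq)

lemma seg_cursor_hit:
  assumes "M 0 = x" "x \<le> length \<sigma>" "M 1 = q" "q < length aux" "aux ! q = x"
  shows "\<exists>M'. (stp ^^ 8) (7, M, out) = (1, M', out)
         \<and> M' 0 = x \<and> M' 1 = Suc q \<and> (\<forall>r\<ge>6. M' r = M r)"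
proof -
  have "aux ! q mod W = x" using aux_nth_mod assms by simp
  moreover have "Suc q < W" using assms length_aux_le length_plus_5_less_W by simp
  ultimately show ?thesis using assms by (simp add: funpow_numeral_step step_prog_eq)
qed

lemma seg_cursor_miss:
  assumes "M 0 = x" "1 \<le> x" "x \<le> length \<sigma>" "M 1 = q" "\<not> (q < length aux \<and> aux ! q = x)"
  shows "\<exists>M'. (stp ^^ 5) (7, M, out) = (12, M', out)
         \<and> M' 0 = x \<and> M' 1 = q \<and> (\<forall>r\<ge>6. M' r = M r)"
proof (cases "q < length aux")
  case True
  have x: "x < W" using assms length_plus_5_less_W by simp
  have "((x - aux ! q) + (aux ! q - x)) mod W \<noteq> 0"
    using absdiff_mod[OF x aux_nth_less_W[OF True]] assms True by auto
  then show ?thesis using assms True by (simp add: funpow_numeral_step step_prog_eq aux_nth_mod)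
next
  case False
  have "x mod W \<noteq> 0" using assms by simp
  then show ?thesis using assms False by (simp add: funpow_numeral_step step_prog_eq)
qed

lemma seg_pile_i_empty:
  assumes "M 1 = 2"
  shows "\<exists>M'. (stp ^^ 3) (12, M, out) = (21, M', out)
         \<and> M' 0 = M 0 \<and> M' 1 = M 1 \<and> (\<forall>r\<ge>6. M' r = M r)"
  using assms by (simp add: funpow_numeral_step step_prog_eq)

lemma seg_pile_i_nonempty:
  assumes "2 < M 1"
  shows "\<exists>M'. (stp ^^ 3) (12, M, out) = (15, M', out)
         \<and> M' 0 = M 0 \<and> M' 1 = M 1 \<and> (\<forall>r\<ge>6. M' r = M r)"
  using assms by (simp add: funpow_numeral_step step_prog_eq)

lemma seg_i_zero:
  assumes "i = 0"
  shows "\<exists>M'. (stp ^^ 3) (21, M, out) = (28, M', out)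
         \<and> M' 0 = M 0 \<and> M' 1 = M 1 \<and> (\<forall>r\<ge>6. M' r = M r)"
proof -
  have "aux ! 0 = i" by simp
  also have "i = 0" by (rule assms)
  finally have "aux ! 0 = 0" .
  then show ?thesis by (simp add: funpow_numeral_step step_prog_eq del: aux_0)
qed

lemma seg_i_pos:
  assumes "i \<noteq> 0"
  shows "\<exists>M'. (stp ^^ 4) (21, M, out) = (1, M', out)
         \<and> M' 0 = M 0 \<and> M' 1 = M 1 \<and> (\<forall>r\<ge>6. M' r = M r)"
  using assms by (simp add: funpow_numeral_step step_prog_eq)

lemma seg_above_top:
  assumes "M 0 = x" "1 \<le> x" "x \<le> length \<sigma>" "M 1 = q" "2 < q" "q - 1 < length aux"
    "aux ! (q - 1) = tp" "1 \<le> tp" "tp \<le> length \<sigma>" "sval \<sigma> tp < sval \<sigma> x"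
  shows "\<exists>M'. (stp ^^ 5) (15, M, out) = (28, M', out)
         \<and> M' 0 = M 0 \<and> M' 1 = M 1 \<and> (\<forall>r\<ge>6. M' r = M r)"
proof -
  have "aux ! (q - 1) mod W = tp" using aux_nth_mod assms by simp
  then show ?thesis using assms by (simp add: funpow_numeral_step step_prog_eq)
qed

lemma seg_below_top:
  assumes "M 0 = x" "1 \<le> x" "x \<le> length \<sigma>" "M 1 = q" "2 < q" "q - 1 < length aux"
    "aux ! (q - 1) = tp" "1 \<le> tp" "tp \<le> length \<sigma>" "sval \<sigma> x \<le> sval \<sigma> tp"
  shows "\<exists>M'. (stp ^^ 6) (15, M, out) = (1, M', out)
         \<and> M' 0 = M 0 \<and> M' 1 = M 1 \<and> (\<forall>r\<ge>6. M' r = M r)"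
proof -
  have "aux ! (q - 1) mod W = tp" using aux_nth_mod assms by simp
  then show ?thesis using assms by (simp add: funpow_numeral_step step_prog_eq)
qed

lemma seg_search_init:
  "\<exists>M'. (stp ^^ 6) (28, M, out) = (34, M', out)
     \<and> M' 0 = M 0 \<and> M' 1 = M 1 \<and> M' 2 = 0 \<and> M' 3 = width \<and> (\<forall>r\<ge>6. M' r = M r)"
  by (simp add: funpow_numeral_step step_prog_eq width_def)

lemma seg_slot_inside:
  assumes "M 2 = h" "h < width"
  shows "\<exists>M'. (stp ^^ 7) (51, M, out) = (58, M', out)
         \<and> M' 0 = M 0 \<and> M' 1 = M 1 \<and> M' 2 = h \<and> M' 4 = width \<and> (\<forall>r\<ge>6. M' r = M r)"
  using assms by (simp add: funpow_numeral_step step_prog_eq width_def)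

lemma seg_slot_beyond:
  assumes "M 2 = h" "width \<le> h"
  shows "\<exists>M'. (stp ^^ 7) (51, M, out) = (1, M', out)
         \<and> M' 0 = M 0 \<and> M' 1 = M 1 \<and> (\<forall>r\<ge>6. M' r = M r)"
  using assms by (simp add: funpow_numeral_step step_prog_eq width_def)

lemma seg_store_emit:
  assumes "M 2 = h" "M 4 = width" "Suc h = width"
  shows "\<exists>M'. (stp ^^ 9) (58, M, out) = (1, M', out @ [M 0])
         \<and> M' 0 = M 0 \<and> M' 1 = M 1 \<and> (\<forall>r\<ge>6. M' r = (M(6 + h := M 0)) r)"
proof -
  have "6 + h < W" "Suc h < W" using assms width_le_length length_plus_5_less_W by simp_all
  then show ?thesis using assms by (simp add: funpow_numeral_step step_prog_eq)
qed

lemma seg_store: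
  assumes "M 2 = h" "M 4 = width" "Suc h < width"
  shows "\<exists>M'. (stp ^^ 8) (58, M, out) = (1, M', out)
         \<and> M' 0 = M 0 \<and> M' 1 = M 1 \<and> (\<forall>r\<ge>6. M' r = (M(6 + h := M 0)) r)"
proof -
  have "6 + h < W" "Suc h < W" using assms width_le_length length_plus_5_less_W by simp_all
  then show ?thesis using assms by (simp add: funpow_numeral_step step_prog_eq)
qed

abbreviation agree_off_search :: "(nat \<Rightarrow> nat) \<Rightarrow> (nat \<Rightarrow> nat) \<Rightarrow> bool" where
  "agree_off_search M' M \<equiv> \<forall>r. r \<noteq> 2 \<and> r \<noteq> 3 \<and> r \<noteq> 4 \<and> r \<noteq> 5 \<longrightarrow> M' r = M r"

text \<open>The comparison made by the binary search at window slot k: element M 0 does not go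
  to the right of the pile whose top is stored there (an empty slot, 0, counts as infinity).\<close>
definition goes_left :: "(nat \<Rightarrow> nat) \<Rightarrow> nat \<Rightarrow> bool" where
  "goes_left M k \<longleftrightarrow> M (6 + k) = 0 \<or>
     (1 \<le> M 0 \<and> M 0 \<le> length \<sigma> \<and> 1 \<le> M (6 + k) \<and> M (6 + k) \<le> length \<sigma>
      \<and> sval \<sigma> (M 0) \<le> sval \<sigma> (M (6 + k)))"

lemma seg_search_done:
  assumes "M 2 = lo" "M 3 = hi" "\<not> lo < hi"
  shows "\<exists>M'. (stp ^^ 2) (34, M, out) = (51, M', out)
         \<and> M' 2 = lo \<and> agree_off_search M' M"
  using assms by (simp add: funpow_numeral_step step_prog_eq)

lemma seg_search_empty_slot:
  assumes "M 2 = lo" "M 3 = hi" "lo < hi" "m = (lo + hi) div 2" "lo + hi < W" "6 + m < W"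
    "M (6 + m) = 0"
  shows "\<exists>M'. (stp ^^ 12) (34, M, out) = (34, M', out)
         \<and> M' 2 = lo \<and> M' 3 = m \<and> agree_off_search M' M"
  using assms by (simp add: funpow_numeral_step step_prog_eq)

lemma seg_search_left:
  assumes "M 2 = lo" "M 3 = hi" "lo < hi" "m = (lo + hi) div 2" "lo + hi < W" "6 + m < W"
    "M (6 + m) \<noteq> 0" "goes_left M m"
  shows "\<exists>M'. (stp ^^ 14) (34, M, out) = (34, M', out)
         \<and> M' 2 = lo \<and> M' 3 = m \<and> agree_off_search M' M"
  using assms unfolding goes_left_def by (simp add: funpow_numeral_step step_prog_eq)

lemma seg_search_right:
  assumes "M 2 = lo" "M 3 = hi" "lo < hi" "m = (lo + hi) div 2" "lo + hi < W" "6 + m < W"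
    "m + 1 < W" "\<not> goes_left M m"
  shows "\<exists>M'. (stp ^^ 14) (34, M, out) = (34, M', out)
         \<and> M' 2 = m + 1 \<and> M' 3 = hi \<and> agree_off_search M' M"
proof -
  have "M (6 + m) \<noteq> 0"
    "(if 1 \<le> M 0 \<and> M 0 \<le> length \<sigma> \<and> 1 \<le> M (6 + m) \<and> M (6 + m) \<le> length \<sigma>
         \<and> sval \<sigma> (M 0) \<le> sval \<sigma> (M (6 + m)) then 1 else 0) = (0::nat)"
    using assms(8) unfolding goes_left_def by auto
  then show ?thesis
    using assms by (simp add: funpow_numeral_step funpow_one_step step_prog_eq del: One_nat_def)
qed

definition reaches_within ::
  "nat \<Rightarrow> config \<Rightarrow> nat \<Rightarrow> nat list \<Rightarrow> ((nat \<Rightarrow> nat) \<Rightarrow> bool) \<Rightarrow> bool" where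
  "reaches_within B c pc out Q \<longleftrightarrow> (\<exists>k M. k \<le> B \<and> (stp ^^ k) c = (pc, M, out) \<and> Q M)"

lemma reaches_withinI:
  "(stp ^^ k) c = (pc, M, out) \<Longrightarrow> Q M \<Longrightarrow> k \<le> B \<Longrightarrow> reaches_within B c pc out Q"
  unfolding reaches_within_def by blast

lemma reaches_within_mono:
  assumes "reaches_within B c pc out Q" "\<And>M. Q M \<Longrightarrow> Q' M" "B \<le> B'"
  shows "reaches_within B' c pc out Q'"
  using assms unfolding reaches_within_def by (meson le_trans)

lemma reaches_within_trans:
  assumes "reaches_within B c pc out Q"
    and "\<And>M. Q M \<Longrightarrow> reaches_within B' (pc, M, out) pc' out' Q'"
  shows "reaches_within (B + B') c pc' out' Q'"
proof -
  obtain k M where k: "k \<le> B" "(stp ^^ k) c = (pc, M, out)" "Q M"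
    using assms(1) unfolding reaches_within_def by blast
  obtain k' M' where k': "k' \<le> B'" "(stp ^^ k') (pc, M, out) = (pc', M', out')" "Q' M'"
    using assms(2)[OF k(3)] unfolding reaches_within_def by blast
  show ?thesis using steps_add[OF k(2) k'(2)] k k' by (intro reaches_withinI) auto
qed

lemma reaches_within_steps:
  assumes "(stp ^^ a) c = c'" "reaches_within B c' pc out Q"
  shows "reaches_within (a + B) c pc out Q"
  using assms unfolding reaches_within_def by (metis add_le_mono1 add.commute steps_add)

lemma binary_search:
  assumes "hi \<le> width" "lo \<le> h" "h \<le> hi" "M 2 = lo" "M 3 = hi"
    and "\<forall>k<width. goes_left M k \<longleftrightarrow> h \<le> k"
  shows "reaches_within (14 * floor_log (2 * (hi - lo)) + 2) (34, M, out) 51 out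
           (\<lambda>M'. M' 2 = h \<and> agree_off_search M' M)"
  using assms
proof (induction "hi - lo" arbitrary: lo hi M rule: less_induct)
  case less
  show ?case
  proof (cases "lo < hi")
    case False
    then obtain M' where "(stp ^^ 2) (34, M, out) = (51, M', out)" "M' 2 = h"
        "agree_off_search M' M"
      using seg_search_done[of M lo hi out] less.prems by fastforce
    then show ?thesis by (intro reaches_withinI) auto
  next
    case True
    let ?m = "(lo + hi) div 2"
    have m: "?m < hi" "lo \<le> ?m" "?m < width" using True less.prems by auto
    have W: "lo + hi < W" "6 + ?m < W" "?m + 1 < W"
      using less.prems m width_le_length length_plus_5_less_W two_pow_word_size_ge[of "length \<sigma>"]
      by auto
    have goes_left_m: "goes_left M ?m \<longleftrightarrow> h \<le> ?m" using less.prems(6) m by blast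
    obtain k1 lo' hi' M1 where run: "k1 \<le> 14" "(stp ^^ k1) (34, M, out) = (34, M1, out)"
      and bounds: "M1 2 = lo'" "M1 3 = hi'" "lo' \<le> h" "h \<le> hi'" "hi' \<le> hi"
        "2 * (hi' - lo') \<le> hi - lo"
      and frame: "agree_off_search M1 M"
    proof (cases "goes_left M ?m")
      case True
      then have "h \<le> ?m" using goes_left_m by simp
      show ?thesis
      proof (cases "M (6 + ?m) = 0")
        case True
        then obtain M1 where "(stp ^^ 12) (34, M, out) = (34, M1, out)" "M1 2 = lo" "M1 3 = ?m"
            "agree_off_search M1 M"
          using seg_search_empty_slot[of M lo hi ?m out] less.prems W \<open>lo < hi\<close> by blast
        then show ?thesis using that[of 12 M1 lo ?m] \<open>h \<le> ?m\<close> less.prems by auto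
      next
        case False
        then obtain M1 where "(stp ^^ 14) (34, M, out) = (34, M1, out)" "M1 2 = lo" "M1 3 = ?m"
            "agree_off_search M1 M"
          using seg_search_left[of M lo hi ?m out] \<open>goes_left M ?m\<close> less.prems W \<open>lo < hi\<close> False
          by blast
        then show ?thesis using that[of 14 M1 lo ?m] \<open>h \<le> ?m\<close> less.prems by auto
      qed
    next
      case False
      then have "?m < h" using goes_left_m by simp
      moreover obtain M1 where "(stp ^^ 14) (34, M, out) = (34, M1, out)" "M1 2 = ?m + 1"
          "M1 3 = hi" "agree_off_search M1 M"
        using seg_search_right[of M lo hi ?m out] False less.prems W \<open>lo < hi\<close> by blast
      ultimately show ?thesis using that[of 14 M1 "?m + 1" hi] less.prems by auto
    qed
    have "\<forall>k<width. goes_left M1 k \<longleftrightarrow> h \<le> k"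
      using less.prems(6) frame by (simp add: goes_left_def)
    moreover have "hi' - lo' < hi - lo" using bounds True by linarith
    ultimately have search:
      "reaches_within (14 * floor_log (2 * (hi' - lo')) + 2) (34, M1, out) 51 out
        (\<lambda>M'. M' 2 = h \<and> agree_off_search M' M1)"
      using less.hyps less.prems(1) bounds by simp
    have "floor_log (2 * (hi' - lo')) \<le> floor_log (hi - lo)"
      using bounds(6) by (rule floor_log_le_iff)
    then have cost:
      "k1 + (14 * floor_log (2 * (hi' - lo')) + 2) \<le> 14 * floor_log (2 * (hi - lo)) + 2"
      using run(1) True by simp
    show ?thesis
      using frame cost
        by (intro reaches_within_mono[OF reaches_within_steps[OF run(2) search]]) auto
  qed
qed

lemma window_regs_store:
  assumes "window_regs L M" "h \<le> length L" "\<forall>r\<ge>6. M' r = (M(6 + h := v)) r"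
  shows "window_regs (if h < length L then L[h := v] else L @ [v]) M'"
  using assms unfolding window_regs_def
  by (auto simp: nth_list_update nth_append split: if_splits)

lemma scan_inv_window_unchanged:
  assumes "M' 0 = Suc t" "M' 1 = cursor (Suc t)" "\<forall>r\<ge>6. M' r = M r"
    "window_regs (window t) M" "window (Suc t) = window t"
  shows "scan_inv (Suc t) M'"
  using assms window_regs_frame unfolding scan_inv_def by metis

lemma window_regs_nth: "window_regs L M \<Longrightarrow> M (6 + k) = (if k < length L then L ! k else 0)"
  by (simp add: window_regs_def)

lemma skip_window:
  assumes "landing t < i" "window_regs (window t) M"
    and "M' 0 = Suc t" "M' 1 = cursor (Suc t)" "\<forall>r\<ge>6. M' r = M r"
  shows "scan_inv (Suc t) M' \<and> emitted (Suc t) = emitted t"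
  using scan_inv_window_unchanged[OF assms(3-5,2) window_Suc_left[OF assms(1)]] assms(1) ij
  by (simp add: emitted_Suc pushed_onto_Suc)

lemma store_in_window:
  assumes t: "t < length \<sigma>" and m: "M 0 = Suc t" "M 1 = cursor t" "window_regs (window t) M"
    and ip: "i \<le> landing t"
    and h: "M 2 = min (landing t - i) width"
  shows "reaches_within 16 (51, M, emitted t) 1 (emitted (Suc t)) (scan_inv (Suc t))"
proof -
  let ?p = "landing t"
  have cursor: "cursor (Suc t) = cursor t" using ip by (auto simp: cursor_Suc pushed_onto_Suc)
  show ?thesis
  proof (cases "?p - i < width")
    case True
    obtain M3 where s3: "(stp ^^ 7) (51, M, emitted t) = (58, M3, emitted t)" "M3 0 = M 0"
        "M3 1 = M 1" "M3 2 = ?p - i" "M3 4 = width" "\<forall>r\<ge>6. M3 r = M r"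
      using seg_slot_inside[of M "?p - i" "emitted t"] h True by auto
    have new_window: "?p - i \<le> length (window t)"
      "window (Suc t) = (if ?p - i < length (window t) then (window t)[?p - i := Suc t]
                         else window t @ [Suc t])"
      using window_Suc_inside[OF ip True] by auto
    have stored: "scan_inv (Suc t) M4"
      if "M4 0 = M3 0" "M4 1 = M3 1" "\<forall>r\<ge>6. M4 r = (M3(6 + (?p - i) := M3 0)) r" for M4
    proof -
      have "\<forall>r\<ge>6. M4 r = (M(6 + (?p - i) := Suc t)) r" using that s3 m by auto
      then show ?thesis
        using window_regs_store[OF m(3) new_window(1)] new_window(2) that s3 m cursor
        by (simp add: scan_inv_def)
    qed
    show ?thesis
    proof (cases "Suc (?p - i) = width")
      case True
      then have "?p = j - 1" using ij ip by (simp add: width_def)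
      then have "emitted (Suc t) = emitted t @ [M3 0]"
        using s3 m by (simp add: emitted_Suc pushed_onto_Suc)
      moreover obtain M4 where s4: "(stp ^^ 9) (58, M3, emitted t) = (1, M4, emitted t @ [M3 0])"
          "M4 0 = M3 0" "M4 1 = M3 1" "\<forall>r\<ge>6. M4 r = (M3(6 + (?p - i) := M3 0)) r"
        using seg_store_emit[of M3 "?p - i" "emitted t"] s3 True by auto
      ultimately show ?thesis
        using steps_add[OF s3(1) s4(1)] stored[OF s4(2-4)] by (intro reaches_withinI) auto
    next
      case False
      then have "?p \<noteq> j - 1" using ij ip by (simp add: width_def)
      then have "emitted (Suc t) = emitted t" by (simp add: emitted_Suc pushed_onto_Suc)
      moreover obtain M4 where s4: "(stp ^^ 8) (58, M3, emitted t) = (1, M4, emitted t)"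
          "M4 0 = M3 0" "M4 1 = M3 1" "\<forall>r\<ge>6. M4 r = (M3(6 + (?p - i) := M3 0)) r"
        using seg_store[of M3 "?p - i" "emitted t"] s3 True False \<open>?p - i < width\<close> by auto
      ultimately show ?thesis
        using steps_add[OF s3(1) s4(1)] stored[OF s4(2-4)] by (intro reaches_withinI) auto
    qed
  next
    case False
    obtain M3 where s3: "(stp ^^ 7) (51, M, emitted t) = (1, M3, emitted t)" "M3 0 = M 0"
        "M3 1 = M 1" "\<forall>r\<ge>6. M3 r = M r"
      using seg_slot_beyond[of M width "emitted t"] h False by auto
    have "?p \<noteq> j - 1" using False ij by (simp add: width_def)
    then have "emitted (Suc t) = emitted t" by (simp add: emitted_Suc pushed_onto_Suc)
    moreover have "scan_inv (Suc t) M3"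
      using scan_inv_window_unchanged[of M3 t M] s3 m cursor window_Suc_right[OF ip] False by simp
    ultimately show ?thesis using s3(1) by (intro reaches_withinI) auto
  qed
qed

lemma from_locate:
  assumes t: "t < length \<sigma>" and m: "M 0 = Suc t" "M 1 = cursor t" "window_regs (window t) M"
    and ip: "i \<le> landing t"
  shows "reaches_within (32 + 14 * floor_log (2 * width)) (28, M, emitted t) 1 (emitted (Suc t))
           (scan_inv (Suc t))"
proof -
  let ?h = "min (landing t - i) width"
  obtain M1 where s1: "(stp ^^ 6) (28, M, emitted t) = (34, M1, emitted t)" "M1 0 = M 0"
      "M1 1 = M 1" "M1 2 = 0" "M1 3 = width" "\<forall>r\<ge>6. M1 r = M r"
    using seg_search_init[of M "emitted t"] by blast
  have "goes_left M1 k \<longleftrightarrow> ?h \<le> k" if "k < width" for k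
  proof -
    have "M1 (6 + k) = (if k < length (window t) then window t ! k else 0)"
      using s1(6) window_regs_nth[OF m(3)] by simp
    then show ?thesis
      using goes_left_window_iff[OF ip that t] s1(2) m(1) unfolding goes_left_def by simp
  qed
  then have search:
      "reaches_within (14 * floor_log (2 * width) + 2) (34, M1, emitted t) 51 (emitted t)
      (\<lambda>M2. M2 2 = ?h \<and> (agree_off_search M2 M1))"
    using binary_search[of width 0 ?h M1] s1 by simp
  have store: "reaches_within 16 (51, M2, emitted t) 1 (emitted (Suc t)) (scan_inv (Suc t))"
    if "M2 2 = ?h" "agree_off_search M2 M1" for M2
    using store_in_window[OF t _ _ _ ip, of M2] that s1 m window_regs_frame[OF m(3)] by simp
  show ?thesis
    using reaches_within_steps[OF s1(1) reaches_within_trans[OF search store]]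
    by (rule reaches_within_mono) simp_all
qed

lemma from_top_check:
  assumes t: "t < length \<sigma>" and m: "M 0 = Suc t" "M 1 = cursor t" "window_regs (window t) M"
    and miss: "\<not> (0 < i \<and> landing t = i - 1)"
  shows "reaches_within (40 + 14 * floor_log (2 * width)) (12, M, emitted t) 1 (emitted (Suc t))
           (scan_inv (Suc t))"
proof -
  let ?p = "landing t"
  have cursor: "cursor (Suc t) = cursor t" using miss by (simp add: cursor_Suc pushed_onto_Suc)
  show ?thesis
  proof (cases "cursor t = 2")
    case True
    obtain M2 where s2: "(stp ^^ 3) (12, M, emitted t) = (21, M2, emitted t)" "M2 0 = Suc t"
        "M2 1 = cursor t" "\<forall>r\<ge>6. M2 r = M r"
      using seg_pile_i_empty[of M "emitted t"] True m by auto
    have m2: "window_regs (window t) M2" using window_regs_frame[OF m(3)] s2(4) by simp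
    show ?thesis
    proof (cases "i = 0")
      case True
      obtain M3 where s3: "(stp ^^ 3) (21, M2, emitted t) = (28, M3, emitted t)" "M3 0 = Suc t"
          "M3 1 = cursor t" "\<forall>r\<ge>6. M3 r = M2 r"
        using seg_i_zero[OF True, of M2 "emitted t"] s2 by auto
      then have "reaches_within (32 + 14 * floor_log (2 * width)) (28, M3, emitted t) 1
          (emitted (Suc t)) (scan_inv (Suc t))"
        using from_locate[OF t] window_regs_frame[OF m2] True by simp
      then have "reaches_within (3 + (3 + (32 + 14 * floor_log (2 * width)))) (12, M, emitted t) 1
          (emitted (Suc t)) (scan_inv (Suc t))"
        by (intro reaches_within_steps[OF s2(1)] reaches_within_steps[OF s3(1)])
      then show ?thesis by (rule reaches_within_mono) simp_all
    next
      case False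
      then have "?p < i" using target_below_if_cursor_start True by simp
      moreover obtain M3 where s3: "(stp ^^ 4) (21, M2, emitted t) = (1, M3, emitted t)"
          "M3 0 = Suc t" "M3 1 = cursor t" "\<forall>r\<ge>6. M3 r = M2 r"
        using seg_i_pos[OF False, of M2 "emitted t"] s2 by auto
      ultimately show ?thesis
        using skip_window[OF _ m2] steps_add[OF s2(1) s3(1)] cursor by (intro reaches_withinI) auto
    qed
  next
    case False
    then have q2: "2 < cursor t" by (simp add: cursor_def)
    then have i: "0 < i" by (simp add: cursor_def split: if_splits)
    let ?top = "last (piles_after \<sigma> t ! (i - 1))"
    have top: "i - 1 < length (piles_after \<sigma> t)" "cursor t - 1 < length aux"
      "aux ! (cursor t - 1) = ?top"
      using aux_before_cursor_is_top[OF i t q2] by auto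
    have top_range: "1 \<le> ?top" "?top \<le> length \<sigma>" using top_piles_after_range[OF top(1)] t by auto
    obtain M2 where s2: "(stp ^^ 3) (12, M, emitted t) = (15, M2, emitted t)" "M2 0 = Suc t"
        "M2 1 = cursor t" "\<forall>r\<ge>6. M2 r = M r"
      using seg_pile_i_nonempty[of M "emitted t"] q2 m by auto
    have m2: "window_regs (window t) M2" using window_regs_frame[OF m(3)] s2(4) by simp
    show ?thesis
    proof (cases "sval \<sigma> ?top < sval \<sigma> (Suc t)")
      case True
      obtain M3 where s3: "(stp ^^ 5) (15, M2, emitted t) = (28, M3, emitted t)" "M3 0 = Suc t"
          "M3 1 = cursor t" "\<forall>r\<ge>6. M3 r = M2 r"
        using seg_above_top[of M2 "Suc t" "cursor t" ?top "emitted t"] s2 q2 top top_range True t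
        by auto
      then have "reaches_within (32 + 14 * floor_log (2 * width)) (28, M3, emitted t) 1
          (emitted (Suc t)) (scan_inv (Suc t))"
        using from_locate[OF t] window_regs_frame[OF m2] top_less_iff_target_ge[OF i top(1)] True
        by simp
      then have "reaches_within (3 + (5 + (32 + 14 * floor_log (2 * width)))) (12, M, emitted t) 1
          (emitted (Suc t)) (scan_inv (Suc t))"
        by (intro reaches_within_steps[OF s2(1)] reaches_within_steps[OF s3(1)])
      then show ?thesis by (rule reaches_within_mono) simp_all
    next
      case False
      then have "?p < i" using top_less_iff_target_ge[OF i top(1)] by simp
      moreover obtain M3 where s3: "(stp ^^ 6) (15, M2, emitted t) = (1, M3, emitted t)"
          "M3 0 = Suc t" "M3 1 = cursor t" "\<forall>r\<ge>6. M3 r = M2 r"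
        using seg_below_top[of M2 "Suc t" "cursor t" ?top "emitted t"] s2 q2 top top_range False t
        by auto
      ultimately show ?thesis
        using skip_window[OF _ m2] steps_add[OF s2(1) s3(1)] cursor by (intro reaches_withinI) auto
    qed
  qed
qed

lemma loop_iteration:
  assumes t: "t < length \<sigma>" and inv: "scan_inv t M"
  shows "reaches_within iteration_cost (1, M, emitted t) 1 (emitted (Suc t))
           (scan_inv (Suc t))"
proof -
  have m: "M 0 = t" "M 1 = cursor t" "window_regs (window t) M"
    using inv by (auto simp: scan_inv_def)
  obtain M1 where s1: "(stp ^^ 5) (1, M, emitted t) = (7, M1, emitted t)" "M1 0 = Suc t"
      "M1 1 = cursor t" "\<forall>r\<ge>6. M1 r = M r"
    using seg_advance[of M t "emitted t"] m t by auto
  have m1: "window_regs (window t) M1" using window_regs_frame[OF m(3)] s1(4) by simp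
  show ?thesis
  proof (cases "cursor t < length aux \<and> aux ! cursor t = Suc t")
    case True
    then have hit: "0 < i" "landing t = i - 1"
      using cursor_hit_iff[OF t] by (auto simp: pushed_onto_Suc)
    obtain M2 where s2: "(stp ^^ 8) (7, M1, emitted t) = (1, M2, emitted t)" "M2 0 = Suc t"
        "M2 1 = Suc (cursor t)" "\<forall>r\<ge>6. M2 r = M1 r"
      using seg_cursor_hit[of M1 "Suc t" "cursor t" "emitted t"] True s1 t by auto
    have "cursor (Suc t) = Suc (cursor t)" using hit by (simp add: cursor_Suc pushed_onto_Suc)
    then show ?thesis
      using skip_window[OF _ m1] hit s2 steps_add[OF s1(1) s2(1)] by (intro reaches_withinI) auto
  next
    case False
    then have miss: "\<not> (0 < i \<and> landing t = i - 1)"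
      using cursor_hit_iff[OF t] by (auto simp: pushed_onto_Suc)
    obtain M2 where s2: "(stp ^^ 5) (7, M1, emitted t) = (12, M2, emitted t)" "M2 0 = Suc t"
        "M2 1 = cursor t" "\<forall>r\<ge>6. M2 r = M1 r"
      using seg_cursor_miss[of M1 "Suc t" "cursor t" "emitted t"] False s1 t by auto
    have "reaches_within (40 + 14 * floor_log (2 * width)) (12, M2, emitted t) 1 (emitted (Suc t))
        (scan_inv (Suc t))"
      using from_top_check[OF t s2(2,3) _ miss] window_regs_frame[OF m1 s2(4)] by simp
    then have "reaches_within (5 + (5 + (40 + 14 * floor_log (2 * width)))) (1, M, emitted t) 1
        (emitted (Suc t)) (scan_inv (Suc t))"
      by (intro reaches_within_steps[OF s1(1)] reaches_within_steps[OF s2(1)])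
    then show ?thesis by (rule reaches_within_mono) simp_all
  qed
qed

lemma scan_inv_0: "scan_inv 0 ((\<lambda>_. 0)(1 := 2))"
  by (simp add: scan_inv_def cursor_def window_def window_regs_def)

lemma step_init: "stp init_config = (1, (\<lambda>_. 0)(1 := 2), [])"
  by (simp add: init_config_def step_prog_eq)

lemma run_prefix:
  "t \<le> length \<sigma> \<Longrightarrow>
     reaches_within (1 + t * iteration_cost) init_config 1 (emitted t) (scan_inv t)"
proof (induction t)
  case 0
  have "(stp ^^ 1) init_config = (1, (\<lambda>_. 0)(1 := 2), emitted 0)"
    using step_init by (simp add: emitted_def)
  then show ?case using scan_inv_0 reaches_withinI[of 1] by simp
next
  case (Suc t)
  then have t: "t < length \<sigma>" by simp
  with Suc.IH have "reaches_within (1 + t * iteration_cost) init_config 1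
      (emitted t) (scan_inv t)" by simp
  then have "reaches_within (1 + t * iteration_cost + iteration_cost)
      init_config 1 (emitted (Suc t)) (scan_inv (Suc t))"
    by (rule reaches_within_trans) (rule loop_iteration[OF t])
  then show ?case by (rule reaches_within_mono) simp_all
qed

lemma run_halts:
  "\<exists>T. halted prog ((stp ^^ T) init_config) \<and> out_of ((stp ^^ T) init_config) = pile \<sigma> j
     \<and> T \<le> 6 + length \<sigma> * iteration_cost"
proof -
  obtain k M where k: "k \<le> 1 + length \<sigma> * iteration_cost"
      "(stp ^^ k) init_config = (1, M, emitted (length \<sigma>))" "scan_inv (length \<sigma>) M"
    using run_prefix[of "length \<sigma>"] unfolding reaches_within_def by auto
  obtain M' where "(stp ^^ 5) (1, M, emitted (length \<sigma>)) = (6, M', emitted (length \<sigma>))"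
    using seg_halt[of M "emitted (length \<sigma>)"] k(3) by (auto simp: scan_inv_def)
  then have "(stp ^^ (k + 5)) init_config = (6, M', emitted (length \<sigma>))"
    by (rule steps_add[OF k(2)])
  then show ?thesis using k(1) pile_j_emitted
    by (intro exI[of _ "k + 5"]) (simp add: out_of_def halted_def prog_len)
qed

text \<open>The only store instruction is at pc 60 and writes to address 6 + lo, where lo < width is
  the result of the binary search; the invariant follows this address through pcs 52--60.\<close>
definition space_inv :: "config \<Rightarrow> bool" where
  "space_inv c \<longleftrightarrow> (case c of (pc, M, out) \<Rightarrow>
     (\<forall>r\<ge>6 + width. M r = 0) \<and> (pc = 52 \<longrightarrow> M 4 = 0) \<and> (pc = 53 \<longrightarrow> M 5 = i)
     \<and> (pc = 54 \<longrightarrow> M 5 = i \<and> M 4 = 1) \<and> (pc = 55 \<longrightarrow> M 5 = i \<and> M 4 = j)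
     \<and> (pc = 56 \<longrightarrow> M 4 = width) \<and> (pc = 57 \<longrightarrow> M 4 = width \<and> (M 5 \<noteq> 0 \<longrightarrow> M 2 < width))
     \<and> (pc = 58 \<longrightarrow> M 2 < width) \<and> (pc = 59 \<longrightarrow> M 2 < width \<and> M 5 \<le> 6)
     \<and> (pc = 60 \<longrightarrow> M 5 < 6 + width))"

lemma store_address_bound: "a \<le> 6 \<Longrightarrow> b < j - i \<Longrightarrow> (a + b) mod W < 6 + (j - i)"
  by (meson add_le_less_mono le_less_trans mod_less_eq_dividend)

lemma space_inv_step:
  assumes "space_inv (pc, M, out)"
  shows "space_inv (stp (pc, M, out))"
proof (cases "pc < 68")
  case False
  then show ?thesis using assms by (simp add: step_prog_eq)
next
  case True
  have "\<forall>pc\<in>set [0..<68]. space_inv (pc, M, out) \<longrightarrow> space_inv (stp (pc, M, out))"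
    by (simp add: upt_rec space_inv_def step_prog_eq width_def store_address_bound)
  then show ?thesis using True assms by simp
qed

lemma space_inv_reachable: "space_inv ((stp ^^ t) init_config)"
proof (induction t)
  case 0
  then show ?case by (simp add: space_inv_def init_config_def)
next
  case (Suc t)
  then show ?case using space_inv_step by (cases "(stp ^^ t) init_config") auto
qed

lemma space_le: "space (length \<sigma>) ((stp ^^ t) init_config) \<le> word_size (length \<sigma>) * (6 + width)"
proof -
  obtain pc M out where c: "(stp ^^ t) init_config = (pc, M, out)"
    by (cases "(stp ^^ t) init_config") auto
  then have "\<forall>r\<ge>6 + width. M r = 0" using space_inv_reachable[of t] by (simp add: space_inv_def)
  then have "(LEAST k. \<forall>r\<ge>k. M r = 0) \<le> 6 + width" by (rule Least_le)
  then show ?thesis using c by (simp add: space_def)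
qed

lemma computes_pile:
  "\<exists>T. halted prog (conf prog \<sigma> ([i, j] @ pile \<sigma> i) T)
      \<and> out_of (conf prog \<sigma> ([i, j] @ pile \<sigma> i) T) = pile \<sigma> j
      \<and> real T \<le> 100 * (real (length \<sigma>) + 1) * log 2 (real (length \<sigma>) + 2)
      \<and> (\<forall>t\<le>T. real (space (length \<sigma>) (conf prog \<sigma> ([i, j] @ pile \<sigma> i) t))
            \<le> 100 * (real (length (pile \<sigma> i)) + real (length (pile \<sigma> j)) + real (j - i))
                * log 2 (real (length \<sigma>) + 2))"
proof -
  let ?L = "log 2 (real (length \<sigma>) + 2)"
  have conf: "conf prog \<sigma> ([i, j] @ pile \<sigma> i) t = (stp ^^ t) init_config" for t
    by (simp add: conf_def aux_def)
  obtain T where T: "halted prog ((stp ^^ T) init_config)"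
      "out_of ((stp ^^ T) init_config) = pile \<sigma> j" "T \<le> 6 + length \<sigma> * iteration_cost"
    using run_halts by blast
  have "real T \<le> real (6 + length \<sigma> * iteration_cost)"
    using T(3) by (simp only: of_nat_le_iff)
  also have "\<dots> \<le> 100 * (real (length \<sigma>) + 1) * ?L"
    by (rule time_bound_le[OF floor_log_double_le_log[OF width_le_length] one_le_log2_plus_2])
  finally have "real T \<le> 100 * (real (length \<sigma>) + 1) * ?L" .
  moreover have "real (space (length \<sigma>) ((stp ^^ t) init_config))
      \<le> 100 * (real (length (pile \<sigma> i)) + real (length (pile \<sigma> j)) + real (j - i)) * ?L" for t
  proof -
    have "real (space (length \<sigma>) ((stp ^^ t) init_config))
        \<le> real (word_size (length \<sigma>) * (6 + width))"
      using space_le[of t] by (simp only: of_nat_le_iff)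
    also have "\<dots> = real (word_size (length \<sigma>)) * (6 + real width)" by simp
    also have "\<dots> \<le> (3 * ?L) * (7 * real width)"
      using word_size_le_log width_pos by (intro mult_mono) simp_all
    also have "\<dots> \<le> 100 * (real (length (pile \<sigma> i)) + real (length (pile \<sigma> j)) + real (j - i)) * ?L"
      using one_le_log2_plus_2[of "length \<sigma>"] by (simp add: width_def)
    finally show ?thesis .
  qed
  ultimately show ?thesis using T unfolding conf by blast
qed

end

theorem lemma7:
  "\<exists>(P :: instr list) (c :: real). c > 0 \<and>
     (\<forall>(\<sigma> :: int list) (i :: nat) (j :: nat).
        i < j \<and> j \<le> length (piles \<sigma>) \<longrightarrow>
        (let n = length \<sigma>; A = [i, j] @ pile \<sigma> i in
         \<exists>T. halted P (conf P \<sigma> A T)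
            \<and> out_of (conf P \<sigma> A T) = pile \<sigma> j
            \<and> real T \<le> c * (real n + 1) * log 2 (real n + 2)
            \<and> (\<forall>t\<le>T. real (space n (conf P \<sigma> A t))
                  \<le> c * (real (length (pile \<sigma> i)) + real (length (pile \<sigma> j)) + real (j - i))
                      * log 2 (real n + 2))))"
  using pile_scan.computes_pile unfolding pile_scan_def Let_def
  by (intro exI[of _ prog] exI[of _ "100::real"]) simp

end
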